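(* Let $f_j$, $j\in J=\{1,\dots,m\}$, be functions on $\mathbb{R}^n$, each strongly convex with constant $\mu_j>0$; let $D=\{x: f_j(x)\le 0,\ j\in J\}$ satisfy the Slater condition; let $f$ be a convex function attaining its minimum on $D$, such that no point of absolute minimum of $f$ on $\mathbb{R}^n$ (if one exists) lies in $\operatorname{int}D$. Let $x^*$ be the (unique) solution of $\min\{f(x):x\in D\}$, $f^*=f(x^* )$, $E^*=\{x\in\mathbb{R}^n: f(x)\le f^*\}$, $F(x)=\max_{j\in J}f_j(x)$, $\mu=\min_j\mu_j$, $D_\varepsilon=\{x:F(x)\le\varepsilon\}$. Let $\varepsilon>0$. Then every point $y\in D_\varepsilon\cap E^*$ with $y\ne x^*$ satisfies $\|y-x^*\|\le\sqrt{\varepsilon/\mu}$; if moreover $f$ satisfies a Lipschitz condition with constant $L$, then also $|f(y)-f^*|\le L\sqrt{\varepsilon/\mu}$.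
   Context: Each set $D_j=\{x:f_j(x)\le0\}$ is assumed to have nonempty interior. *)

theory Defs
  imports "HOL-Analysis.Analysis"
begin

text \<open>Strong convexity with constant mu (convention without the factor 1/2):
  g(a x + (1-a) y) \<le> a g x + (1-a) g y - a (1-a) mu |x-y|^2.\<close>
definition strongly_convex_on :: "'a::real_normed_vector set \<Rightarrow> real \<Rightarrow> ('a \<Rightarrow> real) \<Rightarrow> bool" where
  "strongly_convex_on S mu g \<longleftrightarrow> convex S \<and>
     (\<forall>x\<in>S. \<forall>y\<in>S. \<forall>a::real. 0 \<le> a \<and> a \<le> 1 \<longrightarrow>
        g (a *\<^sub>R x + (1 - a) *\<^sub>R y) \<le> a * g x + (1 - a) * g y - a * (1 - a) * mu * (norm (x - y))\<^sup>2)"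

end

theory Submission
  imports Defs
begin

text \<open>Let \<open>y\<close> satisfy \<open>F y \<le> \<epsilon>\<close> and \<open>f y \<le> f\<^sup>*\<close>, put \<open>d = \<parallel>y - x\<^sup>*\<parallel>\<close>, and suppose
  \<open>\<mu> d\<^sup>2 > \<epsilon>\<close>. For the point \<open>z = a y + (1 - a) x\<^sup>*\<close> with \<open>0 < a < 1\<close> and \<open>(1 - a) \<mu> d\<^sup>2 > \<epsilon>\<close>, strong convexity gives
  \<open>f\<^sub>j z \<le> a \<epsilon> - a (1 - a) \<mu> d\<^sup>2 < 0\<close> for every \<open>j\<close>, so \<open>z\<close> lies in the interior of \<open>D\<close>, while
  convexity of \<open>f\<close> gives \<open>f z \<le> f\<^sup>*\<close>. Thus \<open>z\<close> is a minimiser of \<open>f\<close> on \<open>D\<close> in the interior of \<open>D\<close>,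
  hence a local and therefore a global minimiser of the convex function \<open>f\<close>, which is excluded.\<close>

lemma strongly_convex_on_mono:
  assumes "strongly_convex_on S mu g" "mu' \<le> mu"
  shows "strongly_convex_on S mu' g"
  unfolding strongly_convex_on_def
proof (intro conjI ballI allI impI)
  show "convex S" using assms(1) by (simp add: strongly_convex_on_def)
  fix x y and a :: real assume xy: "x \<in> S" "y \<in> S" and a: "0 \<le> a \<and> a \<le> 1"
  have "a * (1 - a) * mu' * (norm (x - y))\<^sup>2 \<le> a * (1 - a) * mu * (norm (x - y))\<^sup>2"
    using a assms(2) by (intro mult_right_mono mult_left_mono) auto
  moreover have "g (a *\<^sub>R x + (1 - a) *\<^sub>R y) \<le> a * g x + (1 - a) * g y - a * (1 - a) * mu * (norm (x - y))\<^sup>2"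
    using assms(1) xy a unfolding strongly_convex_on_def by blast
  ultimately show "g (a *\<^sub>R x + (1 - a) *\<^sub>R y) \<le> a * g x + (1 - a) * g y - a * (1 - a) * mu' * (norm (x - y))\<^sup>2"
    by linarith
qed

lemma strongly_convex_on_imp_convex_on:
  assumes "strongly_convex_on S mu g" "0 \<le> mu"
  shows "convex_on S g"
proof (rule convex_onI)
  have sc0: "strongly_convex_on S 0 g"
    using strongly_convex_on_mono[OF assms] .
  then show "convex S" by (simp add: strongly_convex_on_def)
  fix t :: real and x y assume "0 < t" "t < 1" "x \<in> S" "y \<in> S"
  then show "g ((1 - t) *\<^sub>R x + t *\<^sub>R y) \<le> (1 - t) * g x + t * g y"
    using sc0 unfolding strongly_convex_on_def by (simp add: add.commute)
qed

lemma strongly_convex_on_combination_neg: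
  assumes sc: "strongly_convex_on S mu g"
    and "x \<in> S" "y \<in> S" "g x \<le> 0" "g y \<le> eps" "0 < a" "a < 1"
    and gap: "eps < (1 - a) * mu * (norm (y - x))\<^sup>2"
  shows "g (a *\<^sub>R y + (1 - a) *\<^sub>R x) < 0"
proof -
  have "g (a *\<^sub>R y + (1 - a) *\<^sub>R x) \<le> a * g y + (1 - a) * g x - a * (1 - a) * mu * (norm (y - x))\<^sup>2"
    using sc assms(2-7) unfolding strongly_convex_on_def by simp
  also have "\<dots> \<le> a * eps - a * (1 - a) * mu * (norm (y - x))\<^sup>2"
    using add_mono[OF mult_left_mono[OF \<open>g y \<le> eps\<close>] mult_nonneg_nonpos[of "1 - a" "g x"]] assms(4-7)
    by simp
  also have "\<dots> = a * (eps - (1 - a) * mu * (norm (y - x))\<^sup>2)"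
    by (simp add: algebra_simps)
  also have "\<dots> < 0"
    using \<open>0 < a\<close> gap by (simp add: mult_pos_neg)
  finally show ?thesis .
qed

lemma strict_sublevel_subset_interior:
  fixes g :: "'j \<Rightarrow> 'a::topological_space \<Rightarrow> real"
  assumes "finite J" "\<And>j. j \<in> J \<Longrightarrow> continuous_on UNIV (g j)"
  shows "{x. \<forall>j\<in>J. g j x < 0} \<subseteq> interior {x. \<forall>j\<in>J. g j x \<le> 0}"
proof (rule interior_maximal)
  have "{x. \<forall>j\<in>J. g j x < 0} = (\<Inter>j\<in>J. {x. g j x < 0})" by auto
  also have "open \<dots>"
    using assms by (intro open_INT) (auto intro!: open_Collect_less continuous_on_const)
  finally show "open {x. \<forall>j\<in>J. g j x < 0}" .
qed fastforce

lemma strongly_convex_constraints_dist_sq_le: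
  fixes J :: "'j set" and g :: "'j \<Rightarrow> 'a::euclidean_space \<Rightarrow> real" and f :: "'a \<Rightarrow> real"
  defines "D \<equiv> {x. \<forall>j\<in>J. g j x \<le> 0}"
  assumes "finite J" "0 < mu"
    and sc: "\<And>j. j \<in> J \<Longrightarrow> strongly_convex_on UNIV mu (g j)"
    and f_convex: "convex_on UNIV f"
    and no_min_in_interior: "\<And>x. x \<in> interior D \<Longrightarrow> \<exists>w. f w < f x"
    and xstar_in: "xstar \<in> D" and xstar_min: "\<And>x. x \<in> D \<Longrightarrow> f xstar \<le> f x"
    and y_feasible: "\<And>j. j \<in> J \<Longrightarrow> g j y \<le> eps" and y_below: "f y \<le> f xstar"
    and "0 \<le> eps"
  shows "mu * (norm (y - xstar))\<^sup>2 \<le> eps"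
proof (rule ccontr)
  define c where "c = mu * (norm (y - xstar))\<^sup>2"
  assume "\<not> mu * (norm (y - xstar))\<^sup>2 \<le> eps"
  then have "eps < c" "0 < c" using \<open>0 \<le> eps\<close> by (auto simp: c_def)
  define a where "a = (c - eps) / (2 * c)"
  have a: "0 < a" "a < 1" "eps < (1 - a) * c"
    using \<open>eps < c\<close> \<open>0 < c\<close> \<open>0 \<le> eps\<close> by (auto simp: a_def field_simps)
  define z where "z = a *\<^sub>R y + (1 - a) *\<^sub>R xstar"
  have "g j z < 0" if "j \<in> J" for j
    unfolding z_def
  proof (rule strongly_convex_on_combination_neg[OF sc[OF that], where eps = eps])
    show "eps < (1 - a) * mu * (norm (y - xstar))\<^sup>2"
      using a by (simp add: c_def mult.assoc)
  qed (use that a xstar_in y_feasible in \<open>auto simp: D_def\<close>)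
  moreover have "continuous_on UNIV (g j)" if "j \<in> J" for j
    using sc[OF that] \<open>0 < mu\<close>
    by (intro convex_on_continuous strongly_convex_on_imp_convex_on) auto
  ultimately have z_interior: "z \<in> interior D"
    using strict_sublevel_subset_interior[OF \<open>finite J\<close>] unfolding D_def by blast
  have "f z \<le> (1 - a) * f xstar + a * f y"
    using convex_onD[OF f_convex, of a xstar y] a by (simp add: z_def add.commute)
  also have "\<dots> \<le> f xstar"
    using y_below a by (simp add: algebra_simps mult_left_mono)
  finally have z_min: "f z \<le> f x" if "x \<in> D" for x
    using xstar_min[OF that] by linarith
  obtain e where "0 < e" "ball z e \<subseteq> D"
    using z_interior mem_interior by blast
  then have "\<forall>w\<in>UNIV. f z \<le> f w"
    using z_min by (intro convex_local_global_minimum[OF _ f_convex]) auto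
  then show False
    using no_min_in_interior[OF z_interior] by (meson UNIV_I not_le)
qed

theorem lemma1p1p8:
  fixes fs :: "nat \<Rightarrow> real^'n \<Rightarrow> real"
    and mus :: "nat \<Rightarrow> real"
    and m :: nat
    and f :: "real^'n \<Rightarrow> real"
    and xstar :: "real^'n"
    and eps :: real
  assumes m_pos: "m \<ge> 1"
    and mus_pos: "\<forall>j\<in>{1..m}. mus j > 0"
    and strong: "\<forall>j\<in>{1..m}. strongly_convex_on UNIV (mus j) (fs j)"
    and Dj_int: "\<forall>j\<in>{1..m}. interior {x. fs j x \<le> 0} \<noteq> {}"
    and slater: "\<exists>x. \<forall>j\<in>{1..m}. fs j x < 0"
    and f_convex: "convex_on UNIV f"
    and min_attained: "\<exists>x\<in>{x. \<forall>j\<in>{1..m}. fs j x \<le> 0}. \<forall>z\<in>{x. \<forall>j\<in>{1..m}. fs j x \<le> 0}. f x \<le> f z"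
    and no_abs_min_in_int: "\<forall>x\<in>interior {x. \<forall>j\<in>{1..m}. fs j x \<le> 0}. \<not> (\<forall>z. f x \<le> f z)"
    and xstar_in: "xstar \<in> {x. \<forall>j\<in>{1..m}. fs j x \<le> 0}"
    and xstar_min: "\<forall>z\<in>{x. \<forall>j\<in>{1..m}. fs j x \<le> 0}. f xstar \<le> f z"
    and eps_pos: "eps > 0"
  shows "\<forall>y \<in> {x. Max ((\<lambda>j. fs j x) ` {1..m}) \<le> eps} \<inter> {x. f x \<le> f xstar}.
           y \<noteq> xstar \<longrightarrow>
             norm (y - xstar) \<le> sqrt (eps / Min (mus ` {1..m})) \<and>
             (\<forall>L. L-lipschitz_on UNIV f \<longrightarrow>
                \<bar>f y - f xstar\<bar> \<le> L * sqrt (eps / Min (mus ` {1..m})))"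
proof (intro ballI impI conjI allI)
  define mu where "mu = Min (mus ` {1..m})"
  have "0 < mu" using mus_pos m_pos by (simp add: mu_def)
  have strong_mu: "strongly_convex_on UNIV mu (fs j)" if "j \<in> {1..m}" for j
    using strong that by (auto simp: mu_def intro: strongly_convex_on_mono[of _ "mus j"])
  have no_min: "\<exists>w. f w < f x" if "x \<in> interior {x. \<forall>j\<in>{1..m}. fs j x \<le> 0}" for x
    using no_abs_min_in_int that by (meson not_le)
  fix y assume y: "y \<in> {x. Max ((\<lambda>j. fs j x) ` {1..m}) \<le> eps} \<inter> {x. f x \<le> f xstar}"
  have y_feasible: "fs j y \<le> eps" if "j \<in> {1..m}" for j
    using y that by simp
  have "mu * (norm (y - xstar))\<^sup>2 \<le> eps"
    using strongly_convex_constraints_dist_sq_le[OF _ \<open>0 < mu\<close> strong_mu f_convex no_min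
        xstar_in _ y_feasible] xstar_min y eps_pos
    by simp
  then have dist_le: "norm (y - xstar) \<le> sqrt (eps / mu)"
    using \<open>0 < mu\<close> by (intro real_le_rsqrt) (simp add: field_simps)
  then show "norm (y - xstar) \<le> sqrt (eps / Min (mus ` {1..m}))"
    by (simp add: mu_def)
  fix L assume L: "L-lipschitz_on UNIV f"
  have "\<bar>f y - f xstar\<bar> \<le> L * norm (y - xstar)"
    using lipschitz_onD[OF L, of y xstar] by (simp add: dist_real_def dist_norm)
  also have "\<dots> \<le> L * sqrt (eps / mu)"
    using dist_le lipschitz_on_nonneg[OF L] by (simp add: mult_left_mono)
  finally show "\<bar>f y - f xstar\<bar> \<le> L * sqrt (eps / Min (mus ` {1..m}))"
    by (simp add: mu_def)
qed

end
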